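(* Let $b=2$, $c>0$ and $k\in\left(0,\frac{c}{3}\right)$. Let $\phi=\phi_k\in C^\infty(\mathbb{R})$ be the solitary wave profile of $$u_t-u_{txx}+3uu_x=2u_xu_{xx}+uu_{xxx},$$ that is, the travelling wave $u(t,x)=\phi(x-ct)$ with $\phi'(0)=0$, $\phi(x)\to k$ as $|x|\to\infty$ and $0<\phi<c$. Then the mapping $$k\mapsto Q(\phi)=\int_{\mathbb{R}}\left[2\frac{c-k}{c-\phi}-\left(\frac{c-k}{c-\phi}\right)^2-1\right]dx$$ is strictly increasing on $\left(0,\frac{c}{3}\right)$. *)

theory Defs
  imports "HOL-Analysis.Analysis"
begin

definition smooth_real :: "(real \<Rightarrow> real) \<Rightarrow> bool" where
  "smooth_real f \<longleftrightarrow> (\<forall>n x. (deriv ^^ n) f differentiable (at x))"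

text \<open>Solitary wave profile of the b-family equation with b = 2 (Camassa--Holm)
  u_t - u_txx + 3 u u_x = 2 u_x u_xx + u u_xxx, for the travelling wave
  u(t,x) = phi(x - c t), which turns the PDE into the ODE below
  (u_t = -c phi', u_txx = -c phi''').  Solitary waves are non-constant.\<close>
definition CH_solitary_wave :: "real \<Rightarrow> real \<Rightarrow> (real \<Rightarrow> real) \<Rightarrow> bool" where
  "CH_solitary_wave c k \<phi> \<longleftrightarrow>
     smooth_real \<phi> \<and>
     (\<forall>x. - c * deriv \<phi> x + c * (deriv ^^ 3) \<phi> x + 3 * \<phi> x * deriv \<phi> x
           = 2 * deriv \<phi> x * (deriv ^^ 2) \<phi> x + \<phi> x * (deriv ^^ 3) \<phi> x) \<and>
     deriv \<phi> 0 = 0 \<and>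
     (\<phi> \<longlongrightarrow> k) at_top \<and> (\<phi> \<longlongrightarrow> k) at_bot \<and>
     (\<forall>x. 0 < \<phi> x \<and> \<phi> x < c) \<and>
     (\<exists>x. \<phi> x \<noteq> k)"

definition Q_functional :: "real \<Rightarrow> real \<Rightarrow> (real \<Rightarrow> real) \<Rightarrow> real" where
  "Q_functional c k \<phi> =
     (\<integral>x. (2 * ((c - k) / (c - \<phi> x)) - ((c - k) / (c - \<phi> x))^2 - 1) \<partial>lborel)"

end

theory Submission
  imports Defs "HOL-Real_Asymp.Real_Asymp"
begin

text \<open>
  The travelling-wave equation has two first integrals; evaluating their constants at infinity
  gives the profile equation \<open>(c - \<phi>) \<phi>'\<^sup>2 = (\<phi> - k)\<^sup>2 (c - 2k - \<phi>)\<close>. A Gronwall argument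
  shows \<open>\<phi> \<noteq> k\<close>, so \<open>\<phi>\<close> is a single hump with crest \<open>\<phi> 0 = c - 2k\<close>, increasing on the
  negative half-line; the reflected profile \<open>\<phi> (-x)\<close> is again a solitary wave. The integrand of
  \<open>Q\<close> equals \<open>-(\<phi> - k)\<^sup>2 / (c - \<phi>)\<^sup>2\<close>, and on each half-line the substitution
  \<open>\<phi> = k + t (c - 3k)\<close> turns its integral into \<open>\<integral>\<^sub>0\<^sup>1 t / \<surd>(1 - t) \<rho>\<^sup>3\<^sup>/\<^sup>2 dt\<close> with
  \<open>\<rho> = (c - 3k) / (c - k - t (c - 3k))\<close>. Since \<open>\<rho>\<close> decreases strictly in \<open>k\<close>, so does this
  integral, and \<open>Q = -2 \<integral>\<^sub>0\<^sup>1 \<dots>\<close> increases.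
\<close>

section \<open>Differential inequalities on the real line\<close>

lemma not_tendsto_if_deriv_ge:
  fixes g g' :: "real \<Rightarrow> real"
  assumes deriv: "\<And>x. x \<ge> N \<Longrightarrow> (g has_real_derivative g' x) (at x)"
    and "\<delta> > 0" and ge: "\<And>x. x \<ge> N \<Longrightarrow> g' x \<ge> \<delta>"
  shows "\<not> (g \<longlongrightarrow> l) at_top"
proof
  have linear_bound: "g N + \<delta> * (x - N) \<le> g x" if "N \<le> x" for x
  proof -
    have "g N - \<delta> * N \<le> g x - \<delta> * x"
      using that deriv ge
      by (intro DERIV_nonneg_imp_nondecreasing[of N x "\<lambda>x. g x - \<delta> * x"])
         (auto intro!: exI derivative_eq_intros)
    thus ?thesis by (simp add: algebra_simps)
  qed
  have "filterlim (\<lambda>x. g N + \<delta> * (x - N)) at_top at_top"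
    using \<open>\<delta> > 0\<close> by real_asymp
  hence "filterlim g at_top at_top"
    by (rule filterlim_at_top_mono) (use linear_bound in \<open>auto simp: eventually_at_top_linorder\<close>)
  moreover assume "(g \<longlongrightarrow> l) at_top"
  ultimately show False
    using not_tendsto_and_filterlim_at_infinity filterlim_at_top_imp_at_infinity by fastforce
qed

lemma tendsto_abs_deriv_at_top_eq_0:
  fixes g g' :: "real \<Rightarrow> real"
  assumes deriv: "\<And>x. (g has_real_derivative g' x) (at x)" and cont: "continuous_on UNIV g'"
    and lim: "(g \<longlongrightarrow> l) at_top" and lim_abs: "((\<lambda>x. \<bar>g' x\<bar>) \<longlongrightarrow> \<beta>) at_top"
  shows "\<beta> = 0"
proof (rule ccontr)
  assume "\<beta> \<noteq> 0"
  moreover have "\<beta> \<ge> 0" using lim_abs by (rule tendsto_lowerbound) auto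
  ultimately have "\<beta> > 0" by simp
  then obtain N where N: "\<And>x. x \<ge> N \<Longrightarrow> \<bar>g' x\<bar> > \<beta>/2"
    using order_tendstoD(1)[OF lim_abs, of "\<beta>/2"] by (auto simp: eventually_at_top_linorder)
  define s where "s = sgn (g' N)"
  have "\<bar>s\<bar> = 1" using N[of N] \<open>\<beta> > 0\<close> by (simp add: s_def abs_sgn_eq)
  have same_sign: "s * g' x > 0" if xN: "x \<ge> N" for x
  proof (rule ccontr)
    assume "\<not> s * g' x > 0"
    moreover have "s * g' N > 0" using N[of N] \<open>\<beta> > 0\<close> by (auto simp: s_def sgn_real_def)
    moreover have "continuous_on {N..x} (\<lambda>x. s * g' x)"
      by (intro continuous_intros continuous_on_subset[OF cont]) auto
    ultimately obtain z where "N \<le> z" "z \<le> x" "s * g' z = 0"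
      using IVT2'[of "\<lambda>x. s * g' x" x 0 N] xN by auto
    thus False using N[of z] \<open>\<beta> > 0\<close> \<open>\<bar>s\<bar> = 1\<close> by auto
  qed
  have "\<not> ((\<lambda>x. s * g x) \<longlongrightarrow> s * l) at_top"
  proof (rule not_tendsto_if_deriv_ge[where N = N and \<delta> = "\<beta>/2"])
    show "((\<lambda>x. s * g x) has_real_derivative s * g' x) (at x)" for x
      using deriv by (rule DERIV_cmult)
    show "s * g' x \<ge> \<beta>/2" if "x \<ge> N" for x
    proof -
      have "s * g' x = \<bar>g' x\<bar>"
        using same_sign[OF that] \<open>\<bar>s\<bar> = 1\<close> by (metis abs_mult abs_of_pos mult_1)
      with N[OF that] show ?thesis by simp
    qed
  qed (use \<open>\<beta> > 0\<close> in simp)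
  with lim show False by (auto intro: tendsto_intros)
qed

lemma tendsto_deriv_at_top_eq_0:
  fixes g g' :: "real \<Rightarrow> real"
  assumes "\<And>x. (g has_real_derivative g' x) (at x)" "continuous_on UNIV g'"
    and "(g \<longlongrightarrow> l) at_top" "(g' \<longlongrightarrow> m) at_top"
  shows "m = 0"
  using tendsto_abs_deriv_at_top_eq_0[OF assms(1-3) tendsto_rabs[OF assms(4)]] by simp

lemma DERIV_mult_exp:
  fixes w w' :: "real \<Rightarrow> real"
  assumes "\<And>t. (w has_real_derivative w' t) (at t)"
  shows "((\<lambda>t. w t * exp (a * t)) has_real_derivative (w' t + a * w t) * exp (a * t)) (at t)"
proof -
  have "((\<lambda>t. exp (a * t)) has_real_derivative exp (a * t) * a) (at t)"
    using DERIV_exp[THEN DERIV_chain2, OF DERIV_cmult[OF DERIV_ident, of a]] by simp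
  from DERIV_mult[OF assms this] show ?thesis by (simp add: algebra_simps)
qed

lemma DERIV_abs_le_mult_imp_eq_0:
  fixes w w' :: "real \<Rightarrow> real"
  assumes deriv: "\<And>x. (w has_real_derivative w' x) (at x)"
    and nonneg: "\<And>x. 0 \<le> w x" and bound: "\<And>x. \<bar>w' x\<bar> \<le> L * w x" and "w x\<^sub>0 = 0"
  shows "w x = 0"
proof (cases "x\<^sub>0 \<le> x")
  case True
  have decreasing: "\<exists>z. ((\<lambda>t. w t * exp (- L * t)) has_real_derivative z) (at t) \<and> z \<le> 0" for t
  proof (intro exI conjI)
    show "(w' t + - L * w t) * exp (- L * t) \<le> 0"
      using bound[of t] by (intro mult_nonpos_nonneg) auto
  qed (rule DERIV_mult_exp[OF deriv])
  have "w x * exp (- L * x) \<le> w x\<^sub>0 * exp (- L * x\<^sub>0)"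
    by (rule DERIV_nonpos_imp_nonincreasing[OF True decreasing])
  with \<open>w x\<^sub>0 = 0\<close> nonneg[of x] show ?thesis by (simp add: mult_le_0_iff)
next
  case False
  have increasing: "\<exists>z. ((\<lambda>t. w t * exp (L * t)) has_real_derivative z) (at t) \<and> z \<ge> 0" for t
  proof (intro exI conjI)
    show "(w' t + L * w t) * exp (L * t) \<ge> 0"
      using bound[of t] by (intro mult_nonneg_nonneg) auto
  qed (rule DERIV_mult_exp[OF deriv])
  have "w x * exp (L * x) \<le> w x\<^sub>0 * exp (L * x\<^sub>0)"
    by (rule DERIV_nonneg_imp_nondecreasing[OF _ increasing]) (use False in simp)
  with \<open>w x\<^sub>0 = 0\<close> nonneg[of x] show ?thesis by (simp add: mult_le_0_iff)
qed

section \<open>Reflection of solitary waves\<close>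

lemma has_real_derivative_funpow_deriv_reflect:
  assumes "smooth_real f"
  shows "((\<lambda>x. (-1)^n * (deriv ^^ n) f (- x)) has_real_derivative (-1)^Suc n * (deriv ^^ Suc n) f (- x)) (at x)"
proof -
  have "((deriv ^^ n) f has_real_derivative (deriv ^^ Suc n) f (- x)) (at (- x))"
    using assms by (simp add: smooth_real_def DERIV_deriv_iff_real_differentiable)
  from DERIV_cmult[OF DERIV_chain2[OF this DERIV_minus[OF DERIV_ident]], of "(-1)^n"]
  show ?thesis by simp
qed

lemma funpow_deriv_reflect:
  assumes "smooth_real f"
  shows "(deriv ^^ n) (\<lambda>x. f (- x)) = (\<lambda>x. (-1)^n * (deriv ^^ n) f (- x))"
proof (induction n)
  case (Suc n)
  have "(deriv ^^ Suc n) (\<lambda>x. f (- x)) = deriv (\<lambda>x. (-1)^n * (deriv ^^ n) f (- x))"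
    by (simp add: Suc.IH)
  also have "\<dots> = (\<lambda>x. (-1)^Suc n * (deriv ^^ Suc n) f (- x))"
    by (rule ext DERIV_imp_deriv has_real_derivative_funpow_deriv_reflect[OF assms])+
  finally show ?case .
qed simp

lemma smooth_real_reflect:
  assumes "smooth_real f"
  shows "smooth_real (\<lambda>x. f (- x))"
  unfolding smooth_real_def funpow_deriv_reflect[OF assms]
  using has_real_derivative_funpow_deriv_reflect[OF assms] real_differentiable_def by blast

text \<open>Every term of the travelling-wave equation contains an odd total number of derivatives,
  so the equation is invariant under \<open>x \<mapsto> -x\<close>.\<close>
lemma CH_solitary_wave_reflect:
  assumes "CH_solitary_wave c k \<phi>"
  shows "CH_solitary_wave c k (\<lambda>x. \<phi> (- x))"
proof -
  have smooth: "smooth_real \<phi>" using assms by (simp add: CH_solitary_wave_def)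
  have derivs: "deriv (\<lambda>x. \<phi> (- x)) = (\<lambda>x. - deriv \<phi> (- x))"
    "(deriv ^^ 2) (\<lambda>x. \<phi> (- x)) = (\<lambda>x. (deriv ^^ 2) \<phi> (- x))"
    "(deriv ^^ 3) (\<lambda>x. \<phi> (- x)) = (\<lambda>x. - (deriv ^^ 3) \<phi> (- x))"
    using funpow_deriv_reflect[OF smooth, of 1] funpow_deriv_reflect[OF smooth, of 2]
      funpow_deriv_reflect[OF smooth, of 3]
    by simp_all
  have ode: "- c * deriv \<phi> y + c * (deriv ^^ 3) \<phi> y + 3 * \<phi> y * deriv \<phi> y
           = 2 * deriv \<phi> y * (deriv ^^ 2) \<phi> y + \<phi> y * (deriv ^^ 3) \<phi> y" for y
    using assms by (simp add: CH_solitary_wave_def)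
  show ?thesis
    using assms ode[of "- _"] smooth_real_reflect[OF smooth]
    unfolding CH_solitary_wave_def derivs filterlim_at_bot_mirror filterlim_at_top_mirror[of \<phi>]
    by (auto simp: algebra_simps) (metis minus_minus)
qed

section \<open>Substitution on a half-line\<close>

lemma nn_integral_indicator_UN_incseq:
  fixes h :: "'a \<Rightarrow> real"
  assumes "incseq A" "\<And>n. A n \<in> sets M" "h \<in> borel_measurable M"
  shows "(\<integral>\<^sup>+x. ennreal (h x * indicator (\<Union>n. A n) x) \<partial>M)
       = (SUP n. \<integral>\<^sup>+x. ennreal (h x * indicator (A n) x) \<partial>M)"
proof -
  have "ennreal (h x * indicator S x) = ennreal (h x) * indicator S x" for S x
    by (simp split: split_indicator)
  thus ?thesis
    using SUP_emeasure_incseq[of A "density M (\<lambda>x. ennreal (h x))"] assms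
    by (simp add: emeasure_density image_subset_iff)
qed

lemma nn_integral_substitution_at_bot:
  fixes f g g' :: "real \<Rightarrow> real"
  assumes [measurable]: "f \<in> borel_measurable borel"
    and deriv: "\<And>x. (g has_real_derivative g' x) (at x)" and cont: "continuous_on UNIV g'"
    and nonneg: "\<And>x. x \<le> b \<Longrightarrow> 0 \<le> g' x"
    and above: "\<And>x. x \<le> b \<Longrightarrow> a < g x"
    and lim: "(g \<longlongrightarrow> a) at_bot"
  shows "(\<integral>\<^sup>+x. ennreal (f (g x) * g' x * indicator {..b} x) \<partial>lborel)
       = (\<integral>\<^sup>+t. ennreal (f t * indicator {a<..g b} t) \<partial>lborel)"
proof -
  have [measurable]: "g \<in> borel_measurable borel" "g' \<in> borel_measurable borel"
    using DERIV_continuous_on[OF deriv] cont by (auto intro: borel_measurable_continuous_onI)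
  define A where "A n = {b - real n..b}" for n
  define I where "I n = {g (b - real n)..g b}" for n
  have mono: "g x \<le> g y" if "x \<le> y" "y \<le> b" for x y
    by (rule DERIV_nonneg_imp_nondecreasing[OF that(1)]) (meson deriv nonneg order_trans that(2))
  have "incseq A" "incseq I"
    by (auto simp: A_def I_def incseq_def intro: mono)
  have "(\<Union>n. A n) = {..b}"
  proof (intro antisym subsetI)
    fix x assume "x \<in> {..b}"
    moreover obtain n :: nat where "b - x \<le> real n" using real_arch_simple by blast
    ultimately show "x \<in> (\<Union>n. A n)" by (auto simp: A_def intro!: exI[of _ n])
  qed (auto simp: A_def)
  moreover have "(\<Union>n. I n) = {a<..g b}"
  proof (intro antisym subsetI)
    fix t assume "t \<in> (\<Union>n. I n)"
    then obtain n where "g (b - real n) \<le> t" "t \<le> g b" by (auto simp: I_def)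
    with above[of "b - real n"] show "t \<in> {a<..g b}" by simp
  next
    fix t assume t: "t \<in> {a<..g b}"
    then obtain N where N: "\<And>x. x \<le> N \<Longrightarrow> g x < t"
      using order_tendstoD(2)[OF lim, of t] by (auto simp: eventually_at_bot_linorder)
    obtain n :: nat where "b - N \<le> real n" using real_arch_simple by blast
    with N[of "b - real n"] t show "t \<in> (\<Union>n. I n)" by (auto simp: I_def intro!: exI[of _ n])
  qed
  ultimately have unions: "{..b} = (\<Union>n. A n)" "{a<..g b} = (\<Union>n. I n)" by simp_all
  have "(\<integral>\<^sup>+x. ennreal (f (g x) * g' x * indicator (A n) x) \<partial>lborel)
      = (\<integral>\<^sup>+t. ennreal (f t * indicator (I n) t) \<partial>lborel)" for n
    unfolding A_def I_def
    by (rule nn_integral_substitution[symmetric])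
       (auto simp: set_borel_measurable_def intro: deriv nonneg continuous_on_subset[OF cont])
  thus ?thesis
    unfolding unions
    using nn_integral_indicator_UN_incseq[OF \<open>incseq A\<close>, of lborel "\<lambda>x. f (g x) * g' x"]
      nn_integral_indicator_UN_incseq[OF \<open>incseq I\<close>, of lborel f]
    by (simp add: A_def I_def)
qed

section \<open>Shape of the solitary wave\<close>

locale solitary_wave =
  fixes c k :: real and \<phi> :: "real \<Rightarrow> real"
  assumes k_pos: "0 < k" and k_less: "k < c / 3"
    and wave: "CH_solitary_wave c k \<phi>"
begin

definition "\<phi>' = deriv \<phi>"
definition "\<phi>'' = deriv \<phi>'"
definition "\<phi>''' = deriv \<phi>''"

abbreviation "crest \<equiv> c - 2 * k"

lemma smooth: "smooth_real \<phi>"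
  and \<phi>'_0: "\<phi>' 0 = 0"
  and \<phi>_tendsto_at_top: "(\<phi> \<longlongrightarrow> k) at_top"
  and \<phi>_tendsto_at_bot: "(\<phi> \<longlongrightarrow> k) at_bot"
  and \<phi>_pos: "0 < \<phi> x"
  and \<phi>_less_c: "\<phi> x < c"
  and \<phi>_nonconst: "\<exists>x. \<phi> x \<noteq> k"
  using wave by (auto simp: CH_solitary_wave_def \<phi>'_def)

lemma ode: "(c - \<phi> x) * \<phi>''' x = 2 * \<phi>' x * \<phi>'' x + (c - 3 * \<phi> x) * \<phi>' x"
  using wave by (simp add: CH_solitary_wave_def \<phi>'_def \<phi>''_def \<phi>'''_def eval_nat_numeral algebra_simps)

lemma \<phi>_has_deriv: "(\<phi> has_real_derivative \<phi>' x) (at x)"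
  and \<phi>'_has_deriv: "(\<phi>' has_real_derivative \<phi>'' x) (at x)"
  and \<phi>''_has_deriv: "(\<phi>'' has_real_derivative \<phi>''' x) (at x)"
  using smooth[unfolded smooth_real_def, rule_format, of 0 x] smooth[unfolded smooth_real_def, rule_format, of 1 x]
    smooth[unfolded smooth_real_def, rule_format, of 2 x]
  by (simp_all add: \<phi>'_def \<phi>''_def \<phi>'''_def DERIV_deriv_iff_real_differentiable eval_nat_numeral)

lemma continuous_\<phi>: "continuous_on UNIV \<phi>"
  and continuous_\<phi>': "continuous_on UNIV \<phi>'"
  and continuous_\<phi>'': "continuous_on UNIV \<phi>''"
  using \<phi>_has_deriv \<phi>'_has_deriv \<phi>''_has_deriv by (auto intro: has_real_derivative_imp_continuous_on)

lemma c_minus_k_pos: "0 < c - k"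
  using k_pos k_less by simp

definition "E = (c - \<phi> 0) * \<phi>'' 0 - (\<phi>' 0)^2 / 2 - c * \<phi> 0 + 3/2 * (\<phi> 0)^2"

lemma first_integral: "(c - \<phi> x) * \<phi>'' x = (\<phi>' x)^2 / 2 + c * \<phi> x - 3/2 * (\<phi> x)^2 + E"
proof -
  define h where "h x = (c - \<phi> x) * \<phi>'' x - (\<phi>' x)^2 / 2 - c * \<phi> x + 3/2 * (\<phi> x)^2" for x
  have "(h has_real_derivative 0) (at y)" for y
  proof -
    have "(h has_real_derivative
            (c - \<phi> y) * \<phi>''' y - 2 * \<phi>' y * \<phi>'' y - (c - 3 * \<phi> y) * \<phi>' y) (at y)"
      unfolding h_def[abs_def] by (auto intro!: derivative_eq_intros \<phi>_has_deriv \<phi>'_has_deriv \<phi>''_has_deriv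
               simp: power2_eq_square algebra_simps)
    thus ?thesis by (simp add: ode)
  qed
  hence "h x = h 0" by (blast intro: DERIV_isconst_all)
  thus ?thesis by (simp add: h_def E_def)
qed

definition "B = (c - \<phi> 0) * (\<phi>' 0)^2 - c * (\<phi> 0)^2 + (\<phi> 0)^3 - 2 * E * \<phi> 0"

lemma second_integral: "(c - \<phi> x) * (\<phi>' x)^2 = c * (\<phi> x)^2 - (\<phi> x)^3 + 2 * E * \<phi> x + B"
proof -
  define h where "h x = (c - \<phi> x) * (\<phi>' x)^2 - c * (\<phi> x)^2 + (\<phi> x)^3 - 2 * E * \<phi> x" for x
  have "(h has_real_derivative 0) (at y)" for y
  proof -
    have "(h has_real_derivative \<phi>' y * (2 * ((c - \<phi> y) * \<phi>'' y)
            - (\<phi>' y)^2 - 2 * c * \<phi> y + 3 * (\<phi> y)^2 - 2 * E)) (at y)"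
      unfolding h_def[abs_def] by (auto intro!: derivative_eq_intros \<phi>_has_deriv \<phi>'_has_deriv
               simp: power2_eq_square power3_eq_cube algebra_simps)
    moreover have "\<phi>' y * (2 * ((c - \<phi> y) * \<phi>'' y)
            - (\<phi>' y)^2 - 2 * c * \<phi> y + 3 * (\<phi> y)^2 - 2 * E) = 0"
      unfolding first_integral by (simp add: algebra_simps)
    ultimately show ?thesis by simp
  qed
  hence "h x = h 0" by (blast intro: DERIV_isconst_all)
  thus ?thesis by (simp add: h_def B_def)
qed

lemma \<phi>'_tendsto_at_top: "(\<phi>' \<longlongrightarrow> 0) at_top"
  and second_integral_at_k: "c * k^2 - k^3 + 2 * E * k + B = 0"
proof -
  define P where "P y = c * y^2 - y^3 + 2 * E * y + B" for y
  have "(\<phi>' x)^2 = P (\<phi> x) / (c - \<phi> x)" for x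
    using second_integral[of x] \<phi>_less_c[of x] by (simp add: P_def field_simps)
  moreover have "((\<lambda>x. P (\<phi> x) / (c - \<phi> x)) \<longlongrightarrow> P k / (c - k)) at_top"
    unfolding P_def using c_minus_k_pos by (intro tendsto_intros \<phi>_tendsto_at_top) auto
  ultimately have "((\<lambda>x. sqrt ((\<phi>' x)^2)) \<longlongrightarrow> sqrt (P k / (c - k))) at_top"
    by (simp add: tendsto_real_sqrt)
  hence lim: "((\<lambda>x. \<bar>\<phi>' x\<bar>) \<longlongrightarrow> sqrt (P k / (c - k))) at_top" by simp
  have "sqrt (P k / (c - k)) = 0"
    by (rule tendsto_abs_deriv_at_top_eq_0[OF \<phi>_has_deriv continuous_\<phi>' \<phi>_tendsto_at_top lim])
  thus "c * k^2 - k^3 + 2 * E * k + B = 0" using c_minus_k_pos by (simp add: P_def)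
  with lim show "(\<phi>' \<longlongrightarrow> 0) at_top" by (simp add: P_def tendsto_rabs_zero_iff)
qed

lemma E_eq: "E = 3/2 * k^2 - c * k"
proof -
  have "\<phi>'' x = ((\<phi>' x)^2 / 2 + c * \<phi> x - 3/2 * (\<phi> x)^2 + E) / (c - \<phi> x)" for x
    using first_integral[of x] \<phi>_less_c[of x] by (simp add: field_simps)
  hence eq: "\<phi>'' = (\<lambda>x. ((\<phi>' x)^2 / 2 + c * \<phi> x - 3/2 * (\<phi> x)^2 + E) / (c - \<phi> x))" ..
  have "(\<phi>'' \<longlongrightarrow> (0^2 / 2 + c * k - 3/2 * k^2 + E) / (c - k)) at_top"
    unfolding eq using c_minus_k_pos by (intro tendsto_intros \<phi>_tendsto_at_top \<phi>'_tendsto_at_top) auto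
  hence "(0^2 / 2 + c * k - 3/2 * k^2 + E) / (c - k) = 0"
    by (rule tendsto_deriv_at_top_eq_0[OF \<phi>'_has_deriv continuous_\<phi>'' \<phi>'_tendsto_at_top])
  thus ?thesis using c_minus_k_pos by (simp add: field_simps)
qed

lemma profile_eq: "(c - \<phi> x) * (\<phi>' x)^2 = (\<phi> x - k)^2 * (crest - \<phi> x)"
proof -
  have "B = c * k^2 - 2 * k^3"
    using second_integral_at_k by (simp add: E_eq power2_eq_square power3_eq_cube algebra_simps)
  thus ?thesis
    unfolding second_integral E_eq by (simp add: power2_eq_square power3_eq_cube algebra_simps)
qed

lemma \<phi>''_at_crest_neg:
  assumes "\<phi> x = crest" "\<phi>' x = 0"
  shows "\<phi>'' x < 0"
proof -
  have "4 * k * \<phi>'' x = - ((c - 3 * k)^2)"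
    using first_integral[of x] assms by (simp add: E_eq power2_eq_square algebra_simps)
  moreover have "(c - 3 * k)^2 > 0" using k_less by simp
  ultimately have "(4 * k) * \<phi>'' x < 0" by simp
  thus ?thesis using k_pos by (simp add: mult_less_0_iff)
qed

lemma \<phi>_le_crest: "\<phi> x \<le> crest"
proof (cases "\<phi> x = k")
  case False
  have "0 \<le> (c - \<phi> x) * (\<phi>' x)^2"
    using \<phi>_less_c[of x] by simp
  hence "0 \<le> (\<phi> x - k)^2 * (crest - \<phi> x)"
    unfolding profile_eq .
  with False show ?thesis by (simp add: zero_le_mult_iff)
qed (use k_less in simp)

lemma \<phi>'_sq_le: "(\<phi>' x)^2 \<le> crest / (2 * k) * (\<phi> x - k)^2"
proof -
  have "2 * k * (\<phi>' x)^2 \<le> (c - \<phi> x) * (\<phi>' x)^2"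
    using \<phi>_le_crest[of x] by (intro mult_right_mono) auto
  also have "\<dots> \<le> (\<phi> x - k)^2 * crest"
    unfolding profile_eq using \<phi>_pos[of x] by (intro mult_left_mono) auto
  finally show ?thesis using k_pos by (simp add: field_simps mult.commute)
qed

lemma \<phi>_neq_k: "\<phi> x \<noteq> k"
proof
  assume "\<phi> x = k"
  have "(\<phi> y - k)^2 = 0" for y
  proof (rule DERIV_abs_le_mult_imp_eq_0[where w = "\<lambda>y. (\<phi> y - k)^2"
        and w' = "\<lambda>y. 2 * (\<phi> y - k) * \<phi>' y" and L = "1 + crest / (2 * k)" and x\<^sub>0 = x])
    show "((\<lambda>y. (\<phi> y - k)^2) has_real_derivative 2 * (\<phi> y - k) * \<phi>' y) (at y)" for y
      by (auto intro!: derivative_eq_intros \<phi>_has_deriv)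
    show "\<bar>2 * (\<phi> y - k) * \<phi>' y\<bar> \<le> (1 + crest / (2 * k)) * (\<phi> y - k)^2" for y
    proof -
      have "\<bar>2 * (\<phi> y - k) * \<phi>' y\<bar> = 2 * \<bar>\<phi> y - k\<bar> * \<bar>\<phi>' y\<bar>" unfolding abs_mult by simp
      also have "\<dots> \<le> \<bar>\<phi> y - k\<bar>^2 + \<bar>\<phi>' y\<bar>^2" by (rule sum_squares_bound)
      also have "\<dots> \<le> (\<phi> y - k)^2 + crest / (2 * k) * (\<phi> y - k)^2" using \<phi>'_sq_le[of y] by simp
      finally show ?thesis by (simp add: algebra_simps)
    qed
  qed (use \<open>\<phi> x = k\<close> in simp_all)
  hence "\<phi> y = k" for y by simp
  thus False using \<phi>_nonconst by blast
qed

lemma \<phi>'_eq_0_iff: "\<phi>' x = 0 \<longleftrightarrow> \<phi> x = crest"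
  using profile_eq[of x] \<phi>_neq_k[of x] \<phi>_less_c[of x] by auto

lemma \<phi>_0: "\<phi> 0 = crest"
  using \<phi>'_eq_0_iff \<phi>'_0 by simp

lemma k_less_\<phi>: "k < \<phi> x"
proof (rule ccontr)
  assume "\<not> k < \<phi> x"
  moreover have "connected (range \<phi>)"
    using connected_continuous_image[OF continuous_\<phi> connected_UNIV] .
  moreover have "\<phi> x \<in> range \<phi>" "\<phi> 0 \<in> range \<phi>" by auto
  ultimately have "k \<in> range \<phi>"
    using connectedD_interval[of "range \<phi>" "\<phi> x" "\<phi> 0" k] \<phi>_0 k_less by simp
  thus False using \<phi>_neq_k by auto
qed

text \<open>The minimum of \<open>\<phi>\<close> on \<open>[a, b]\<close> is a critical point, hence a crest, so \<open>\<phi>\<close> is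
  constant on \<open>[a, b]\<close>; this contradicts \<open>\<phi>'' < 0\<close> at crests.\<close>
lemma no_two_crests:
  assumes "a < b" "\<phi> a = crest" "\<phi> b = crest"
  shows False
proof -
  obtain z where z: "z \<in> {a..b}" "\<And>y. y \<in> {a..b} \<Longrightarrow> \<phi> z \<le> \<phi> y"
    using continuous_attains_inf[of "{a..b}" \<phi>] \<open>a < b\<close> continuous_on_subset[OF continuous_\<phi>] by auto
  have "\<phi> z = crest"
  proof (cases "z = a \<or> z = b")
    case False
    with z(1) have "a < z" "z < b" by auto
    hence "\<bar>z - y\<bar> < min (z - a) (b - z) \<Longrightarrow> y \<in> {a..b}" for y by auto
    hence "\<phi>' z = 0"
      using z(2) \<open>a < z\<close> \<open>z < b\<close>
      by (intro DERIV_local_min[OF \<phi>_has_deriv, of "min (z - a) (b - z)"]) auto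
    thus ?thesis by (simp add: \<phi>'_eq_0_iff)
  qed (use assms in auto)
  hence on_ab: "y \<in> {a..b} \<Longrightarrow> \<phi> y = crest" for y using z(2) \<phi>_le_crest[of y] by force
  hence flat: "y \<in> {a..b} \<Longrightarrow> \<phi>' y = 0" for y by (simp add: \<phi>'_eq_0_iff)
  define m where "m = (a + b) / 2"
  have "\<phi>'' m = 0"
  proof (rule DERIV_local_const[OF \<phi>'_has_deriv, of "(b - a) / 2"])
    show "\<forall>y. \<bar>m - y\<bar> < (b - a) / 2 \<longrightarrow> \<phi>' m = \<phi>' y"
    proof (intro allI impI)
      fix y assume "\<bar>m - y\<bar> < (b - a) / 2"
      hence "y \<in> {a..b}" "m \<in> {a..b}" using \<open>a < b\<close> by (auto simp: m_def abs_less_iff field_simps)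
      thus "\<phi>' m = \<phi>' y" using flat by simp
    qed
  qed (use \<open>a < b\<close> in simp)
  moreover have "\<phi> m = crest" using \<open>a < b\<close> by (intro on_ab) (simp add: m_def)
  ultimately show False using \<phi>''_at_crest_neg[of m] by (simp add: \<phi>'_eq_0_iff)
qed

lemma \<phi>_less_crest: "x \<noteq> 0 \<Longrightarrow> \<phi> x < crest"
  using \<phi>_le_crest[of x] no_two_crests[of 0 x] no_two_crests[of x 0] \<phi>_0
  by (cases "x < 0") (auto simp: less_le)

lemma \<phi>'_pos:
  assumes "x < 0"
  shows "0 < \<phi>' x"
proof (rule ccontr)
  assume "\<not> 0 < \<phi>' x"
  obtain z where z: "x < z" "z < 0" "\<phi> 0 - \<phi> x = (0 - x) * \<phi>' z"
    using MVT2[OF assms, of \<phi> \<phi>'] \<phi>_has_deriv by blast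
  moreover have "\<phi> x < \<phi> 0" using \<phi>_less_crest[of x] assms \<phi>_0 by simp
  ultimately have "0 < (- x) * \<phi>' z" by simp
  hence "0 < \<phi>' z" using assms by (simp add: zero_less_mult_iff mult_less_0_iff)
  with \<open>\<not> 0 < \<phi>' x\<close> obtain w where "x \<le> w" "w \<le> z" "\<phi>' w = 0"
    using IVT'[of \<phi>' x 0 z] \<open>x < z\<close> continuous_on_subset[OF continuous_\<phi>'] by fastforce
  thus False using \<phi>_less_crest[of w] \<open>z < 0\<close> by (simp add: \<phi>'_eq_0_iff)
qed

lemma \<phi>'_eq:
  assumes "x \<le> 0"
  shows "\<phi>' x = (\<phi> x - k) * sqrt (crest - \<phi> x) / sqrt (c - \<phi> x)"
proof -
  have "(\<phi>' x)^2 = (\<phi> x - k)^2 * ((crest - \<phi> x) / (c - \<phi> x))"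
    using profile_eq[of x] \<phi>_less_c[of x] by (simp add: field_simps)
  hence "sqrt ((\<phi>' x)^2) = \<bar>\<phi> x - k\<bar> * (sqrt (crest - \<phi> x) / sqrt (c - \<phi> x))"
    by (simp add: real_sqrt_mult real_sqrt_divide)
  moreover have "0 \<le> \<phi>' x" using \<phi>'_pos[of x] \<phi>'_0 assms by (cases "x = 0") auto
  ultimately show ?thesis using k_less_\<phi>[of x] by simp
qed

lemma reflect: "solitary_wave c k (\<lambda>x. \<phi> (- x))"
  using k_pos k_less CH_solitary_wave_reflect[OF wave] by unfold_locales

end

section \<open>The kernel of \<open>Q\<close>\<close>

text \<open>\<open>Q_kernel c k t\<close> is the integrand \<open>(\<phi> - k)\<^sup>2 / (c - \<phi>)\<^sup>2 dx\<close> rewritten in the variable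
  \<open>t = (\<phi> - k) / (c - 3k)\<close> by means of the profile equation.\<close>
definition Q_rho :: "real \<Rightarrow> real \<Rightarrow> real \<Rightarrow> real" where
  "Q_rho c k t = (c - 3 * k) / (c - k - t * (c - 3 * k))"

definition Q_kernel :: "real \<Rightarrow> real \<Rightarrow> real \<Rightarrow> real" where
  "Q_kernel c k t = t / sqrt (1 - t) * (Q_rho c k t * sqrt (Q_rho c k t))"

definition Q_kernel_integral :: "real \<Rightarrow> real \<Rightarrow> ennreal" where
  "Q_kernel_integral c k = (\<integral>\<^sup>+t. ennreal (Q_kernel c k t * indicator {0<..<1} t) \<partial>lborel)"

lemma Q_kernel_measurable [measurable]: "Q_kernel c k \<in> borel_measurable borel"
  unfolding Q_kernel_def[abs_def] Q_rho_def by measurable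

lemma Q_rho_denominator_gt:
  fixes c k t :: real
  assumes "k < c / 3" "t < 1"
  shows "2 * k < c - k - t * (c - 3 * k)"
proof -
  have "t * (c - 3 * k) < c - 3 * k" using assms by simp
  thus ?thesis by simp
qed

lemma Q_rho_bounds:
  assumes "0 < k" "k < c / 3" "t < 1"
  shows "0 < Q_rho c k t" "Q_rho c k t \<le> (c - 3 * k) / (2 * k)"
  using Q_rho_denominator_gt[OF assms(2,3)] assms unfolding Q_rho_def by (auto intro: divide_left_mono)

lemma Q_rho_strict_antimono:
  assumes "0 < k\<^sub>1" "k\<^sub>1 < k\<^sub>2" "k\<^sub>2 < c / 3" "t < 1"
  shows "Q_rho c k\<^sub>2 t < Q_rho c k\<^sub>1 t"
proof -
  have "(c - 3 * k\<^sub>1) * (c - k\<^sub>2 - t * (c - 3 * k\<^sub>2)) - (c - 3 * k\<^sub>2) * (c - k\<^sub>1 - t * (c - 3 * k\<^sub>1))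
      = 2 * c * (k\<^sub>2 - k\<^sub>1)"
    by (simp add: algebra_simps)
  moreover have "0 < 2 * c * (k\<^sub>2 - k\<^sub>1)" using assms by simp
  ultimately show ?thesis
    using Q_rho_denominator_gt[of k\<^sub>1 c t] Q_rho_denominator_gt[of k\<^sub>2 c t] assms
    unfolding Q_rho_def by (simp add: divide_less_eq field_simps)
qed

lemma Q_kernel_bounds:
  assumes "0 < k" "k < c / 3" "0 < t" "t < 1"
  shows "0 \<le> Q_kernel c k t"
    "Q_kernel c k t \<le> (c - 3 * k) / (2 * k) * sqrt ((c - 3 * k) / (2 * k)) / sqrt (1 - t)"
proof -
  note \<rho> = Q_rho_bounds[OF assms(1,2,4)]
  show "0 \<le> Q_kernel c k t" using assms \<rho> by (simp add: Q_kernel_def)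
  have "t / sqrt (1 - t) \<le> 1 / sqrt (1 - t)" using assms by (simp add: divide_right_mono)
  moreover have "Q_rho c k t * sqrt (Q_rho c k t) \<le> (c - 3 * k) / (2 * k) * sqrt ((c - 3 * k) / (2 * k))"
    using \<rho> by (intro mult_mono real_sqrt_le_mono) auto
  ultimately have "Q_kernel c k t \<le> 1 / sqrt (1 - t) * ((c - 3 * k) / (2 * k) * sqrt ((c - 3 * k) / (2 * k)))"
    unfolding Q_kernel_def using \<rho> assms by (intro mult_mono) auto
  thus "Q_kernel c k t \<le> (c - 3 * k) / (2 * k) * sqrt ((c - 3 * k) / (2 * k)) / sqrt (1 - t)"
    by (simp add: ac_simps)
qed

lemma Q_kernel_strict_antimono:
  assumes "0 < k\<^sub>1" "k\<^sub>1 < k\<^sub>2" "k\<^sub>2 < c / 3" "0 < t" "t < 1"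
  shows "Q_kernel c k\<^sub>2 t < Q_kernel c k\<^sub>1 t"
proof -
  have "0 < Q_rho c k\<^sub>2 t" using Q_rho_bounds[of k\<^sub>2 c t] assms by simp
  moreover have "Q_rho c k\<^sub>2 t < Q_rho c k\<^sub>1 t" using Q_rho_strict_antimono[of k\<^sub>1 k\<^sub>2 c t] assms by simp
  ultimately have "Q_rho c k\<^sub>2 t * sqrt (Q_rho c k\<^sub>2 t) < Q_rho c k\<^sub>1 t * sqrt (Q_rho c k\<^sub>1 t)"
    by (intro mult_strict_mono) auto
  moreover have "0 < t / sqrt (1 - t)" using assms by simp
  ultimately show ?thesis unfolding Q_kernel_def by (rule mult_strict_left_mono)
qed

lemma Q_kernel_change_of_variables:
  assumes "0 < k" "k < c / 3" "k < y" "y < c - 2 * k"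
  shows "Q_kernel c k ((y - k) / (c - 3 * k)) * ((y - k) * sqrt (c - 2 * k - y) / sqrt (c - y) / (c - 3 * k))
       = (y - k)^2 / (c - y)^2"
proof -
  have pos: "0 < c - 3 * k" "0 < c - y" "0 < c - 2 * k - y" using assms by auto
  have rho: "Q_rho c k ((y - k) / (c - 3 * k)) = (c - 3 * k) / (c - y)"
    using pos by (simp add: Q_rho_def)
  have one_minus: "1 - (y - k) / (c - 3 * k) = (c - 2 * k - y) / (c - 3 * k)"
    using pos by (simp add: field_simps)
  have "a / D / sqrt (N / D) * (D / C * sqrt (D / C)) * (a * sqrt N / sqrt C / D) = a^2 / C^2"
    if "0 < C" "0 < D" "0 < N" for a C D N :: real
  proof -
    have "sqrt D * sqrt D = D" "sqrt C * sqrt C = C" "sqrt N \<noteq> 0" using that by auto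
    thus ?thesis using that by (simp add: real_sqrt_divide field_simps power2_eq_square)
  qed
  from this[OF pos(2,1,3)] show ?thesis unfolding Q_kernel_def rho one_minus .
qed

lemma nn_integral_inverse_sqrt_finite:
  "(\<integral>\<^sup>+t. ennreal (indicator {0<..<1} t * (1 / sqrt (1 - t))) \<partial>lborel) < \<infinity>"
proof -
  have "set_integrable lborel (einterval (ereal 0) (ereal 1)) (\<lambda>t. 1 / sqrt (1 - t))"
  proof (rule interval_integral_FTC_nonneg(1)[where F = "\<lambda>t. - 2 * sqrt (1 - t)" and A = "-2" and B = 0])
    show "((\<lambda>t. - 2 * sqrt (1 - t)) has_real_derivative 1 / sqrt (1 - x)) (at x)"
      if "ereal 0 < ereal x" "ereal x < ereal 1" for x
      using that by (auto intro!: derivative_eq_intros simp: field_simps)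
    show "isCont (\<lambda>t. 1 / sqrt (1 - t)) x" if "ereal 0 < ereal x" "ereal x < ereal 1" for x
      using that by (auto intro!: continuous_intros)
    have "((\<lambda>t. - 2 * sqrt (1 - t)) \<longlongrightarrow> - 2 * sqrt (1 - 0)) (at_right 0)"
      by (intro tendsto_intros)
    thus "(((\<lambda>t. - 2 * sqrt (1 - t)) \<circ> real_of_ereal) \<longlongrightarrow> -2) (at_right (ereal 0))"
      by (simp add: ereal_tendsto_simps1)
    have "((\<lambda>t. - 2 * sqrt (1 - t)) \<longlongrightarrow> - 2 * sqrt (1 - 1)) (at_left 1)"
      by (intro tendsto_intros)
    thus "(((\<lambda>t. - 2 * sqrt (1 - t)) \<circ> real_of_ereal) \<longlongrightarrow> 0) (at_left (ereal 1))"
      by (simp add: ereal_tendsto_simps1)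
  qed auto
  hence "integrable lborel (\<lambda>t. indicator {0<..<1} t * (1 / sqrt (1 - t)))"
    by (simp add: set_integrable_def)
  thus ?thesis using integrableD(2) by (auto simp: less_top)
qed

lemma Q_kernel_integral_finite:
  assumes "0 < k" "k < c / 3"
  shows "Q_kernel_integral c k < \<infinity>"
proof -
  define C where "C = (c - 3 * k) / (2 * k) * sqrt ((c - 3 * k) / (2 * k))"
  have "Q_kernel_integral c k
      \<le> (\<integral>\<^sup>+t. ennreal C * ennreal (indicator {0<..<1} t * (1 / sqrt (1 - t))) \<partial>lborel)"
    unfolding Q_kernel_integral_def
    using Q_kernel_bounds(2)[OF assms] assms
    by (intro nn_integral_mono)
       (auto simp: C_def ennreal_mult[symmetric] intro!: ennreal_leI split: split_indicator)
  also have "\<dots> = ennreal C * (\<integral>\<^sup>+t. ennreal (indicator {0<..<1} t * (1 / sqrt (1 - t))) \<partial>lborel)"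
    by (rule nn_integral_cmult) measurable
  also have "\<dots> < \<infinity>"
    using nn_integral_inverse_sqrt_finite by (simp add: ennreal_mult_less_top)
  finally show ?thesis .
qed

lemma Q_kernel_integral_strict_antimono:
  assumes "0 < k\<^sub>1" "k\<^sub>1 < k\<^sub>2" "k\<^sub>2 < c / 3"
  shows "Q_kernel_integral c k\<^sub>2 < Q_kernel_integral c k\<^sub>1"
  unfolding Q_kernel_integral_def
proof (rule nn_integral_less)
  show "(\<integral>\<^sup>+t. ennreal (Q_kernel c k\<^sub>2 t * indicator {0<..<1} t) \<partial>lborel) \<noteq> \<infinity>"
    using Q_kernel_integral_finite[of k\<^sub>2 c] assms by (simp add: Q_kernel_integral_def)
  have strict: "ennreal (Q_kernel c k\<^sub>2 t) < ennreal (Q_kernel c k\<^sub>1 t)" if "t \<in> {0<..<1}" for t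
    using that Q_kernel_strict_antimono[OF assms, of t] Q_kernel_bounds(1)[of k\<^sub>2 c t] assms
    by (simp add: ennreal_lessI)
  show "AE t in lborel. ennreal (Q_kernel c k\<^sub>2 t * indicator {0<..<1} t)
                         \<le> ennreal (Q_kernel c k\<^sub>1 t * indicator {0<..<1} t)"
    using strict by (intro AE_I2) (auto intro: less_imp_le split: split_indicator)
  show "\<not> (AE t in lborel. ennreal (Q_kernel c k\<^sub>1 t * indicator {0<..<1} t)
                         \<le> ennreal (Q_kernel c k\<^sub>2 t * indicator {0<..<1} t))"
  proof
    assume "AE t in lborel. ennreal (Q_kernel c k\<^sub>1 t * indicator {0<..<1} t)
                         \<le> ennreal (Q_kernel c k\<^sub>2 t * indicator {0<..<1} t)"
    hence "AE t in lborel. t \<notin> {0<..<1::real}"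
    proof eventually_elim
      case (elim t)
      show ?case
      proof
        assume "t \<in> {0<..<1}"
        with elim strict[of t] show False by (simp add: not_le[symmetric])
      qed
    qed
    hence "{0<..<1::real} \<in> null_sets lborel" by (subst AE_iff_null_sets) auto
    thus False by (auto dest: null_setsD1)
  qed
qed measurable

section \<open>Evaluation of \<open>Q\<close>\<close>

context solitary_wave
begin

lemma \<phi>_measurable [measurable]: "\<phi> \<in> borel_measurable borel"
  using continuous_\<phi> by (rule borel_measurable_continuous_onI)

lemma nn_integral_left_half:
  "(\<integral>\<^sup>+x. ennreal ((\<phi> x - k)^2 / (c - \<phi> x)^2 * indicator {..<0} x) \<partial>lborel) = Q_kernel_integral c k"
proof -
  define d where "d = c - 3 * k"
  have "0 < d" using k_less by (simp add: d_def)
  have "(\<integral>\<^sup>+x. ennreal ((\<phi> x - k)^2 / (c - \<phi> x)^2 * indicator {..<0} x) \<partial>lborel)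
      = (\<integral>\<^sup>+x. ennreal (Q_kernel c k ((\<phi> x - k) / d) * (\<phi>' x / d) * indicator {..0} x) \<partial>lborel)"
  proof (intro nn_integral_cong)
    fix x :: real
    consider "x < 0" | "x = 0" | "x > 0" by fastforce
    thus "ennreal ((\<phi> x - k)^2 / (c - \<phi> x)^2 * indicator {..<0} x)
        = ennreal (Q_kernel c k ((\<phi> x - k) / d) * (\<phi>' x / d) * indicator {..0} x)"
    proof cases
      case 1
      thus ?thesis
        using Q_kernel_change_of_variables[OF k_pos k_less k_less_\<phi> \<phi>_less_crest, of x]
        by (simp add: \<phi>'_eq d_def)
    qed (simp_all add: \<phi>'_0)
  qed
  also have "\<dots> = (\<integral>\<^sup>+t. ennreal (Q_kernel c k t * indicator {0<..(\<phi> 0 - k) / d} t) \<partial>lborel)"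
  proof (rule nn_integral_substitution_at_bot)
    show "((\<lambda>x. (\<phi> x - k) / d) has_real_derivative \<phi>' x / d) (at x)" for x
      using \<open>0 < d\<close> by (auto intro!: derivative_eq_intros \<phi>_has_deriv)
    show "continuous_on UNIV (\<lambda>x. \<phi>' x / d)"
      using \<open>0 < d\<close> by (intro continuous_intros continuous_\<phi>') auto
    show "0 \<le> \<phi>' x / d" if "x \<le> 0" for x
      using \<phi>'_pos[of x] \<phi>'_0 that \<open>0 < d\<close> by (cases "x = 0") auto
    show "0 < (\<phi> x - k) / d" for x
      using k_less_\<phi>[of x] \<open>0 < d\<close> by simp
    show "((\<lambda>x. (\<phi> x - k) / d) \<longlongrightarrow> 0) at_bot"
      using tendsto_divide[OF tendsto_diff[OF \<phi>_tendsto_at_bot tendsto_const] tendsto_const, of d k] \<open>0 < d\<close>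
      by simp
  qed measurable
  also have "(\<phi> 0 - k) / d = 1" using \<open>0 < d\<close> by (simp add: \<phi>_0 d_def)
  also have "(\<integral>\<^sup>+t. ennreal (Q_kernel c k t * indicator {0<..1} t) \<partial>lborel) = Q_kernel_integral c k"
    unfolding Q_kernel_integral_def
    by (intro nn_integral_cong_AE, use AE_lborel_singleton[of 1] in eventually_elim)
       (auto split: split_indicator)
  finally show ?thesis .
qed

lemma nn_integral_profile:
  "(\<integral>\<^sup>+x. ennreal ((\<phi> x - k)^2 / (c - \<phi> x)^2) \<partial>lborel) = 2 * Q_kernel_integral c k"
proof -
  interpret reflected: solitary_wave c k "\<lambda>x. \<phi> (- x)" by (rule reflect)
  let ?F = "\<lambda>x. (\<phi> x - k)^2 / (c - \<phi> x)^2"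
  have "(\<integral>\<^sup>+x. ennreal (?F x) \<partial>lborel)
      = (\<integral>\<^sup>+x. ennreal (?F x * indicator {..<0} x) + ennreal (?F x * indicator {0<..} x) \<partial>lborel)"
    by (intro nn_integral_cong_AE, use AE_lborel_singleton[of 0] in eventually_elim)
       (auto split: split_indicator)
  also have "\<dots> = (\<integral>\<^sup>+x. ennreal (?F x * indicator {..<0} x) \<partial>lborel)
                + (\<integral>\<^sup>+x. ennreal (?F x * indicator {0<..} x) \<partial>lborel)"
    by (rule nn_integral_add) auto
  also have "(\<integral>\<^sup>+x. ennreal (?F x * indicator {0<..} x) \<partial>lborel)
      = (\<integral>\<^sup>+x. ennreal (?F (- x) * indicator {..<0} x) \<partial>lborel)"
    using nn_integral_real_affine[of "\<lambda>x. ennreal (?F x * indicator {0<..} x)" "-1" 0]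
    by (simp add: indicator_def)
  finally show ?thesis
    using nn_integral_left_half reflected.nn_integral_left_half by (simp add: mult_2)
qed

lemma Q_functional_eq: "Q_functional c k \<phi> = - 2 * enn2real (Q_kernel_integral c k)"
proof -
  have "2 * ((c - k) / (c - \<phi> x)) - ((c - k) / (c - \<phi> x))^2 - 1 = - ((\<phi> x - k)^2 / (c - \<phi> x)^2)" for x
  proof -
    have "(c - k) / (c - \<phi> x) = 1 + (\<phi> x - k) / (c - \<phi> x)"
      using \<phi>_less_c[of x] by (simp add: field_simps)
    thus ?thesis by (simp add: power2_eq_square power_divide algebra_simps)
  qed
  hence "Q_functional c k \<phi> = - (\<integral>x. (\<phi> x - k)^2 / (c - \<phi> x)^2 \<partial>lborel)"
    by (simp add: Q_functional_def)
  also have "(\<integral>x. (\<phi> x - k)^2 / (c - \<phi> x)^2 \<partial>lborel)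
      = enn2real (\<integral>\<^sup>+x. ennreal ((\<phi> x - k)^2 / (c - \<phi> x)^2) \<partial>lborel)"
    by (rule integral_eq_nn_integral) auto
  finally show ?thesis by (simp add: nn_integral_profile enn2real_mult)
qed

end

theorem lemma5p1:
  fixes c k1 k2 :: real and \<phi>1 \<phi>2 :: "real \<Rightarrow> real"
  assumes "c > 0"
    and "0 < k1" and "k1 < k2" and "k2 < c / 3"
    and "CH_solitary_wave c k1 \<phi>1"
    and "CH_solitary_wave c k2 \<phi>2"
  shows "Q_functional c k1 \<phi>1 < Q_functional c k2 \<phi>2"
proof -
  interpret wave\<^sub>1: solitary_wave c k1 \<phi>1 using assms by unfold_locales auto
  interpret wave\<^sub>2: solitary_wave c k2 \<phi>2 using assms by unfold_locales auto
  have "Q_kernel_integral c k2 < Q_kernel_integral c k1"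
    using assms by (intro Q_kernel_integral_strict_antimono) auto
  moreover have "Q_kernel_integral c k1 < \<infinity>"
    using assms by (intro Q_kernel_integral_finite) auto
  ultimately have "enn2real (Q_kernel_integral c k2) < enn2real (Q_kernel_integral c k1)"
    by (simp add: enn2real_less_iff less_top)
  thus ?thesis by (simp add: wave\<^sub>1.Q_functional_eq wave\<^sub>2.Q_functional_eq)
qed

end
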